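(* Let $X$ be a separated metric compact Hausdorff space. Consider the assignments $\mathrm{Quot}(X)\to\mathrm{Subm}(X)$, $(f\colon X\twoheadrightarrow Y)\mapsto\kappa_f$, and $\mathrm{Subm}(X)\to\mathrm{Quot}(X)$, $\gamma\mapsto(p_\gamma\colon X\twoheadrightarrow X/{\sim_\gamma})$. These form a dual equivalence between the preordered class $\mathrm{Quot}(X)$ and the poset $\mathrm{Subm}(X)$: both are order-reversing, for all $f\in\mathrm{Quot}(X)$ and $\gamma\in\mathrm{Subm}(X)$ one has $\kappa_f\le\gamma$ iff $p_\gamma\le f$, $\kappa_{p_\gamma}=\gamma$, and $p_{\kappa_f}$ is isomorphic to $f$ (i.e. $p_{\kappa_f}\le f\le p_{\kappa_f}$). Consequently the poset $\tilde{\mathbf{Q}}(X)$ of quotient objects of $X$ is dually isomorphic to $\mathrm{Subm}(X)$.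
   Context: A metric on a set $X$ is a map $d\colon X\times X\to[0,\infty]$ with $d(x,x)=0$ and $d(x,z)\le d(x,y)+d(y,z)$ (not necessarily symmetric, $\infty$ allowed); separated means $d(x,y)=0=d(y,x)$ implies $x=y$. The upper topology on $[0,\infty]$ has as nonempty proper open sets the sets $]u,\infty]$. A separated metric compact Hausdorff space is a compact Hausdorff space with a separated metric continuous $X\times X\to[0,\infty]$ for the upper topology; $\mathbf{MetCH_{sep}}$ is the category of these with continuous non-expansive maps. $\mathrm{Quot}(X)$ is the class of surjective morphisms of $\mathbf{MetCH_{sep}}$ with domain $X$, preordered by $f\le g$ iff there is a morphism $h$ with $h\circ f=g$; $\tilde{\mathbf{Q}}(X)$ is the poset obtained by identifying $f,g$ with $f\le g\le f$. For $f\colon X\to Y$, the kernel metric is $\kappa_f(x_1,x_2)=d_Y(f(x_1),f(x_2))$. $\mathrm{Subm}(X)$ is the set of continuous submetrics on $X$: (not necessarily separated) metrics $\gamma$ on $X$ continuous $X\times X\to[0,\infty]$ for the upper topology with $\gamma\le d$ pointwise, ordered pointwise. For $\gamma\in\mathrm{Subm}(X)$, $x\sim_\gamma y$ iff $\gamma(x,y)=\gamma(y,x)=0$; $X/{\sim_\gamma}$ carries the quotient topology and the metric $([x],[y])\mapsto\gamma(x,y)$, and $p_\gamma\colon X\to X/{\sim_\gamma}$ is the projection, a surjective morphism of $\mathbf{MetCH_{sep}}$. *)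

theory Defs
  imports "HOL-Analysis.Analysis" "HOL-Library.Extended_Nonnegative_Real"
begin

text \<open>Distances take values in [0,\<infinity>], modelled by ennreal.
  The upper topology on [0,\<infinity>]: open sets are UNIV and the sets ]u,\<infinity>]
  (u = \<infinity> gives the empty set).\<close>

definition upper_topology :: "ennreal topology" where
  "upper_topology = topology (\<lambda>U. U = UNIV \<or> (\<exists>u. U = {u<..}))"

text \<open>A (not necessarily symmetric, possibly infinite) metric on the carrier S.\<close>
definition is_metric :: "'a set \<Rightarrow> ('a \<Rightarrow> 'a \<Rightarrow> ennreal) \<Rightarrow> bool" where
  "is_metric S d \<longleftrightarrow> (\<forall>x\<in>S. d x x = 0) \<and>
     (\<forall>x\<in>S. \<forall>y\<in>S. \<forall>z\<in>S. d x z \<le> d x y + d y z)"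

definition separated_metric :: "'a set \<Rightarrow> ('a \<Rightarrow> 'a \<Rightarrow> ennreal) \<Rightarrow> bool" where
  "separated_metric S d \<longleftrightarrow> (\<forall>x\<in>S. \<forall>y\<in>S. d x y = 0 \<and> d y x = 0 \<longrightarrow> x = y)"

definition upper_continuous_metric :: "'a topology \<Rightarrow> ('a \<Rightarrow> 'a \<Rightarrow> ennreal) \<Rightarrow> bool" where
  "upper_continuous_metric T d \<longleftrightarrow>
     continuous_map (prod_topology T T) upper_topology (\<lambda>(x, y). d x y)"

definition metCH_sep :: "'a topology \<Rightarrow> ('a \<Rightarrow> 'a \<Rightarrow> ennreal) \<Rightarrow> bool" where
  "metCH_sep T d \<longleftrightarrow> compact_space T \<and> Hausdorff_space T \<and>
     is_metric (topspace T) d \<and> separated_metric (topspace T) d \<and>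
     upper_continuous_metric T d"

definition metCH_mor ::
  "'a topology \<Rightarrow> ('a \<Rightarrow> 'a \<Rightarrow> ennreal) \<Rightarrow> 'b topology \<Rightarrow> ('b \<Rightarrow> 'b \<Rightarrow> ennreal) \<Rightarrow> ('a \<Rightarrow> 'b) \<Rightarrow> bool"
  where
  "metCH_mor T d S e f \<longleftrightarrow> metCH_sep T d \<and> metCH_sep S e \<and> continuous_map T S f \<and>
     (\<forall>x\<in>topspace T. \<forall>y\<in>topspace T. e (f x) (f y) \<le> d x y)"

text \<open>An element of Quot(X): a surjective morphism f : X \<rightarrow> (S, e), recorded
  together with its codomain.\<close>
definition in_Quot ::
  "'a topology \<Rightarrow> ('a \<Rightarrow> 'a \<Rightarrow> ennreal) \<Rightarrow> 'b topology \<times> ('b \<Rightarrow> 'b \<Rightarrow> ennreal) \<times> ('a \<Rightarrow> 'b) \<Rightarrow> bool"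
  where
  "in_Quot T d q \<longleftrightarrow> (case q of (S, e, f) \<Rightarrow>
     metCH_mor T d S e f \<and> f ` topspace T = topspace S)"

definition quot_le ::
  "'a topology \<Rightarrow> 'b topology \<times> ('b \<Rightarrow> 'b \<Rightarrow> ennreal) \<times> ('a \<Rightarrow> 'b)
     \<Rightarrow> 'c topology \<times> ('c \<Rightarrow> 'c \<Rightarrow> ennreal) \<times> ('a \<Rightarrow> 'c) \<Rightarrow> bool" where
  "quot_le T q r \<longleftrightarrow> (case q of (S, e, f) \<Rightarrow> case r of (S', e', g) \<Rightarrow>
     (\<exists>h. metCH_mor S e S' e' h \<and> (\<forall>x\<in>topspace T. h (f x) = g x)))"

definition kernel_metric ::
  "'b topology \<times> ('b \<Rightarrow> 'b \<Rightarrow> ennreal) \<times> ('a \<Rightarrow> 'b) \<Rightarrow> 'a \<Rightarrow> 'a \<Rightarrow> ennreal" where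
  "kernel_metric q = (case q of (S, e, f) \<Rightarrow> (\<lambda>x y. e (f x) (f y)))"

definition in_Subm :: "'a topology \<Rightarrow> ('a \<Rightarrow> 'a \<Rightarrow> ennreal) \<Rightarrow> ('a \<Rightarrow> 'a \<Rightarrow> ennreal) \<Rightarrow> bool"
  where
  "in_Subm T d \<gamma> \<longleftrightarrow> is_metric (topspace T) \<gamma> \<and> upper_continuous_metric T \<gamma> \<and>
     (\<forall>x\<in>topspace T. \<forall>y\<in>topspace T. \<gamma> x y \<le> d x y)"

definition metric_le :: "'a topology \<Rightarrow> ('a \<Rightarrow> 'a \<Rightarrow> ennreal) \<Rightarrow> ('a \<Rightarrow> 'a \<Rightarrow> ennreal) \<Rightarrow> bool"
  where
  "metric_le T \<gamma> \<delta> \<longleftrightarrow> (\<forall>x\<in>topspace T. \<forall>y\<in>topspace T. \<gamma> x y \<le> \<delta> x y)"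

definition quotient_topology :: "'a topology \<Rightarrow> ('a \<Rightarrow> 'b) \<Rightarrow> 'b topology" where
  "quotient_topology X q =
     topology (\<lambda>U. U \<subseteq> q ` topspace X \<and> openin X {x \<in> topspace X. q x \<in> U})"

definition sim_rel :: "('a \<Rightarrow> 'a \<Rightarrow> ennreal) \<Rightarrow> 'a \<Rightarrow> 'a \<Rightarrow> bool" where
  "sim_rel \<gamma> x y \<longleftrightarrow> \<gamma> x y = 0 \<and> \<gamma> y x = 0"

definition proj_class :: "'a topology \<Rightarrow> ('a \<Rightarrow> 'a \<Rightarrow> ennreal) \<Rightarrow> 'a \<Rightarrow> 'a set" where
  "proj_class T \<gamma> x = {y \<in> topspace T. sim_rel \<gamma> x y}"

text \<open>The quotient X/\<sim>_gamma with quotient topology, metric ([x],[y]) \<mapsto> \<gamma>(x,y),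
  and projection p_gamma.\<close>
definition p_quot ::
  "'a topology \<Rightarrow> ('a \<Rightarrow> 'a \<Rightarrow> ennreal) \<Rightarrow> 'a set topology \<times> ('a set \<Rightarrow> 'a set \<Rightarrow> ennreal) \<times> ('a \<Rightarrow> 'a set)"
  where
  "p_quot T \<gamma> =
     (quotient_topology T (proj_class T \<gamma>),
      (\<lambda>A B. \<gamma> (SOME x. x \<in> A) (SOME y. y \<in> B)),
      proj_class T \<gamma>)"

end

theory Submission
  imports Defs
begin

text \<open>A continuous submetric \<gamma> of a compact Hausdorff space X has a closed kernel relation
  \<open>\<sim>\<^sub>\<gamma>\<close>, so the projection onto X/\<open>\<sim>\<^sub>\<gamma>\<close> is a closed map and the quotient is again compact
  Hausdorff; \<gamma> descends to a separated metric on it which is continuous because its sublevel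
  sets are images of the compact sublevel sets of \<gamma>. Conversely, a surjective morphism
  f : X \<rightarrow> Y from the compact space X onto the Hausdorff space Y is a quotient map, so another
  quotient g of X factors through f by a non-expansive continuous map exactly when
  \<open>\<kappa>\<^sub>g \<le> \<kappa>\<^sub>f\<close>. Together with \<open>\<kappa>\<^sub>p\<^sub>\<gamma> = \<gamma>\<close> this yields every claim.\<close>

section \<open>The upper topology on [0,\<infinity>]\<close>

lemma istopology_upper_topology:
  "istopology (\<lambda>U::ennreal set. U = UNIV \<or> (\<exists>u. U = {u<..}))"
  unfolding istopology_def
proof (intro conjI allI impI)
  fix U V :: "ennreal set"
  assume "U = UNIV \<or> (\<exists>u. U = {u<..})" "V = UNIV \<or> (\<exists>v. V = {v<..})"
  then show "U \<inter> V = UNIV \<or> (\<exists>w. U \<inter> V = {w<..})"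
  proof (elim disjE exE)
    fix u v assume "U = {u<..}" "V = {v<..}"
    then have "U \<inter> V = {max u v<..}" by auto
    then show ?thesis by blast
  qed auto
next
  fix \<K> :: "ennreal set set"
  assume \<K>: "\<forall>U\<in>\<K>. U = UNIV \<or> (\<exists>u. U = {u<..})"
  show "\<Union>\<K> = UNIV \<or> (\<exists>w. \<Union>\<K> = {w<..})"
  proof (cases "UNIV \<in> \<K>")
    case False
    with \<K> have rays: "\<forall>U\<in>\<K>. \<exists>u. U = {u<..}" by metis
    have "\<Union>\<K> = {Inf {u. {u<..} \<in> \<K>}<..}"
    proof (intro set_eqI iffI)
      fix x assume "x \<in> \<Union>\<K>"
      with rays show "x \<in> {Inf {u. {u<..} \<in> \<K>}<..}"
        by (auto simp: Inf_less_iff)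
    qed (auto simp: Inf_less_iff)
    then show ?thesis by blast
  qed auto
qed

lemma openin_upper_topology: "openin upper_topology U \<longleftrightarrow> U = UNIV \<or> (\<exists>u. U = {u<..})"
  unfolding upper_topology_def using istopology_upper_topology by simp

lemma topspace_upper_topology [simp]: "topspace upper_topology = UNIV"
  by (metis openin_subset openin_upper_topology top.extremum_uniqueI)

lemma continuous_map_upper_topology_iff:
  "continuous_map X upper_topology g \<longleftrightarrow> (\<forall>u. openin X {x \<in> topspace X. u < g x})"
proof
  assume g: "continuous_map X upper_topology g"
  show "\<forall>u. openin X {x \<in> topspace X. u < g x}"
  proof
    fix u :: ennreal
    show "openin X {x \<in> topspace X. u < g x}"
      using openin_continuous_map_preimage[OF g, of "{u<..}"] by (simp add: openin_upper_topology)
  qed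
qed (auto simp: continuous_map_def openin_upper_topology)

lemma continuous_map_upper_topology_iff_closedin:
  "continuous_map X upper_topology g \<longleftrightarrow> (\<forall>u. closedin X {x \<in> topspace X. g x \<le> u})"
proof -
  have "topspace X - {x \<in> topspace X. g x \<le> u} = {x \<in> topspace X. u < g x}" for u
    by (auto simp: not_le)
  then show ?thesis
    unfolding continuous_map_upper_topology_iff closedin_def by simp
qed

lemma upper_continuous_metric_iff_closedin:
  "upper_continuous_metric T \<gamma> \<longleftrightarrow>
     (\<forall>u. closedin (prod_topology T T) {(x, y) \<in> topspace T \<times> topspace T. \<gamma> x y \<le> u})"
  unfolding upper_continuous_metric_def continuous_map_upper_topology_iff_closedin
  by (simp add: case_prod_unfold mem_Times_iff conj_assoc)

section \<open>Quotient topologies\<close>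

lemma istopology_quotient_topology:
  "istopology (\<lambda>U. U \<subseteq> q ` topspace X \<and> openin X {x \<in> topspace X. q x \<in> U})"
proof -
  have "{x \<in> topspace X. q x \<in> U \<inter> V} = {x \<in> topspace X. q x \<in> U} \<inter> {x \<in> topspace X. q x \<in> V}"
    for U V by auto
  moreover have "{x \<in> topspace X. q x \<in> \<Union>\<K>} = (\<Union>U\<in>\<K>. {x \<in> topspace X. q x \<in> U})" for \<K>
    by auto
  ultimately show ?thesis
    unfolding istopology_def by (auto intro!: openin_Union)
qed

lemma openin_quotient_topology:
  "openin (quotient_topology X q) U \<longleftrightarrow>
     U \<subseteq> q ` topspace X \<and> openin X {x \<in> topspace X. q x \<in> U}"
  unfolding quotient_topology_def topology_inverse'[OF istopology_quotient_topology] ..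

lemma topspace_quotient_topology [simp]: "topspace (quotient_topology X q) = q ` topspace X"
proof (rule antisym)
  have "{x \<in> topspace X. q x \<in> q ` topspace X} = topspace X" by auto
  then show "q ` topspace X \<subseteq> topspace (quotient_topology X q)"
    by (metis openin_quotient_topology openin_subset openin_topspace order_refl)
qed (metis openin_quotient_topology openin_topspace)

lemma quotient_map_quotient_topology: "quotient_map X (quotient_topology X q) q"
  unfolding quotient_map_def openin_quotient_topology by auto

lemma continuous_map_quotient_topology: "continuous_map X (quotient_topology X q) q"
  by (rule quotient_imp_continuous_map[OF quotient_map_quotient_topology])

lemma compact_space_quotient_topology:
  "compact_space X \<Longrightarrow> compact_space (quotient_topology X q)"
  using image_compactin[OF _ continuous_map_quotient_topology, of X "topspace X" q]
  unfolding compact_space_def by simp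

lemma closedin_quotient_topology:
  assumes "U \<subseteq> q ` topspace X"
  shows "closedin (quotient_topology X q) U \<longleftrightarrow> closedin X {x \<in> topspace X. q x \<in> U}"
proof -
  have "{x \<in> topspace X. q x \<in> q ` topspace X - U} = topspace X - {x \<in> topspace X. q x \<in> U}"
    by auto
  with assms show ?thesis
    by (simp add: closedin_def openin_quotient_topology)
qed

section \<open>The quotient of a space by the kernel of a metric\<close>

definition quotient_metric :: "('a \<Rightarrow> 'a \<Rightarrow> ennreal) \<Rightarrow> 'a set \<Rightarrow> 'a set \<Rightarrow> ennreal" where
  "quotient_metric \<gamma> A B = \<gamma> (SOME x. x \<in> A) (SOME y. y \<in> B)"

lemma p_quot_eq:
  "p_quot T \<gamma> = (quotient_topology T (proj_class T \<gamma>), quotient_metric \<gamma>, proj_class T \<gamma>)"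
  unfolding p_quot_def quotient_metric_def by simp

lemma sim_rel_sym: "sim_rel \<gamma> x y \<Longrightarrow> sim_rel \<gamma> y x"
  unfolding sim_rel_def by auto

context
  fixes T :: "'a topology" and \<gamma> :: "'a \<Rightarrow> 'a \<Rightarrow> ennreal"
  assumes metric: "is_metric (topspace T) \<gamma>"
begin

lemma sim_rel_refl: "x \<in> topspace T \<Longrightarrow> sim_rel \<gamma> x x"
  using metric unfolding is_metric_def sim_rel_def by auto

lemma metric_triangle:
  "x \<in> topspace T \<Longrightarrow> y \<in> topspace T \<Longrightarrow> z \<in> topspace T \<Longrightarrow> \<gamma> x z \<le> \<gamma> x y + \<gamma> y z"
  using metric unfolding is_metric_def by auto

lemma sim_rel_trans:
  "x \<in> topspace T \<Longrightarrow> y \<in> topspace T \<Longrightarrow> z \<in> topspace T \<Longrightarrow>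
     sim_rel \<gamma> x y \<Longrightarrow> sim_rel \<gamma> y z \<Longrightarrow> sim_rel \<gamma> x z"
  unfolding sim_rel_def by (metis metric_triangle add.right_neutral le_zero_eq)

lemma metric_le_sim_rel:
  assumes "x \<in> topspace T" "x' \<in> topspace T" "y \<in> topspace T" "y' \<in> topspace T"
    and "sim_rel \<gamma> x x'" "sim_rel \<gamma> y y'"
  shows "\<gamma> x' y' \<le> \<gamma> x y"
proof -
  have "\<gamma> x' y' \<le> \<gamma> x' x + (\<gamma> x y + \<gamma> y y')"
    using metric_triangle assms by (meson add_left_mono order_trans)
  with assms show ?thesis unfolding sim_rel_def by simp
qed

lemma metric_eq_sim_rel:
  assumes "x \<in> topspace T" "x' \<in> topspace T" "y \<in> topspace T" "y' \<in> topspace T"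
    and "sim_rel \<gamma> x x'" "sim_rel \<gamma> y y'"
  shows "\<gamma> x' y' = \<gamma> x y"
  using assms by (intro antisym metric_le_sim_rel) (auto intro: sim_rel_sym)

lemma proj_class_eq_iff:
  assumes "x \<in> topspace T" "y \<in> topspace T"
  shows "proj_class T \<gamma> x = proj_class T \<gamma> y \<longleftrightarrow> sim_rel \<gamma> x y"
proof
  assume "proj_class T \<gamma> x = proj_class T \<gamma> y"
  moreover have "y \<in> proj_class T \<gamma> y"
    unfolding proj_class_def using assms sim_rel_refl by simp
  ultimately have "y \<in> proj_class T \<gamma> x"
    by simp
  then show "sim_rel \<gamma> x y"
    unfolding proj_class_def by simp
next
  assume xy: "sim_rel \<gamma> x y"
  have "sim_rel \<gamma> x z \<longleftrightarrow> sim_rel \<gamma> y z" if "z \<in> topspace T" for z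
    using xy sim_rel_sym sim_rel_trans assms that by metis
  then show "proj_class T \<gamma> x = proj_class T \<gamma> y"
    unfolding proj_class_def by auto
qed

lemma some_mem_proj_class:
  assumes "x \<in> topspace T"
  shows "(SOME a. a \<in> proj_class T \<gamma> x) \<in> topspace T"
    and "sim_rel \<gamma> x (SOME a. a \<in> proj_class T \<gamma> x)"
proof -
  have "x \<in> proj_class T \<gamma> x"
    unfolding proj_class_def using assms sim_rel_refl by auto
  then have "(SOME a. a \<in> proj_class T \<gamma> x) \<in> proj_class T \<gamma> x"
    by (rule someI)
  then show "(SOME a. a \<in> proj_class T \<gamma> x) \<in> topspace T"
    and "sim_rel \<gamma> x (SOME a. a \<in> proj_class T \<gamma> x)"
    unfolding proj_class_def by auto
qed

lemma quotient_metric_proj_class: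
  assumes "x \<in> topspace T" "y \<in> topspace T"
  shows "quotient_metric \<gamma> (proj_class T \<gamma> x) (proj_class T \<gamma> y) = \<gamma> x y"
  unfolding quotient_metric_def
  using assms by (intro metric_eq_sim_rel some_mem_proj_class)

lemma is_metric_quotient_metric: "is_metric (proj_class T \<gamma> ` topspace T) (quotient_metric \<gamma>)"
  unfolding is_metric_def
proof (intro conjI ballI)
  fix A assume "A \<in> proj_class T \<gamma> ` topspace T"
  then obtain x where "x \<in> topspace T" "A = proj_class T \<gamma> x"
    by blast
  then show "quotient_metric \<gamma> A A = 0"
    using metric by (simp add: quotient_metric_proj_class is_metric_def)
next
  fix A B C
  assume "A \<in> proj_class T \<gamma> ` topspace T" "B \<in> proj_class T \<gamma> ` topspace T"
    "C \<in> proj_class T \<gamma> ` topspace T"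
  then obtain x y z where "x \<in> topspace T" "y \<in> topspace T" "z \<in> topspace T"
    and "A = proj_class T \<gamma> x" "B = proj_class T \<gamma> y" "C = proj_class T \<gamma> z"
    by (meson imageE)
  then show "quotient_metric \<gamma> A C \<le> quotient_metric \<gamma> A B + quotient_metric \<gamma> B C"
    by (simp add: quotient_metric_proj_class metric_triangle)
qed

lemma separated_quotient_metric:
  "separated_metric (proj_class T \<gamma> ` topspace T) (quotient_metric \<gamma>)"
  unfolding separated_metric_def
proof (intro ballI impI)
  fix A B
  assume "A \<in> proj_class T \<gamma> ` topspace T" "B \<in> proj_class T \<gamma> ` topspace T"
    and zero: "quotient_metric \<gamma> A B = 0 \<and> quotient_metric \<gamma> B A = 0"
  then obtain x y where xy: "x \<in> topspace T" "y \<in> topspace T"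
    and "A = proj_class T \<gamma> x" "B = proj_class T \<gamma> y"
    by (meson imageE)
  with zero have "sim_rel \<gamma> x y"
    by (simp add: quotient_metric_proj_class sim_rel_def)
  with xy show "A = B"
    using \<open>A = proj_class T \<gamma> x\<close> \<open>B = proj_class T \<gamma> y\<close> by (simp add: proj_class_eq_iff)
qed

end

lemma kernel_metric_p_quot:
  assumes "is_metric (topspace T) \<gamma>" "x \<in> topspace T" "y \<in> topspace T"
  shows "kernel_metric (p_quot T \<gamma>) x y = \<gamma> x y"
  unfolding kernel_metric_def p_quot_eq using quotient_metric_proj_class[OF assms] by simp

section \<open>Quotients of compact Hausdorff spaces\<close>

lemma closedin_Image_closed_relation:
  assumes X: "compact_space X" "Hausdorff_space X"
    and R: "closedin (prod_topology X X) R" and C: "closedin X C"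
  shows "closedin X (R `` C)"
proof -
  have "R `` C = snd ` (R \<inter> (C \<times> topspace X))"
    using closedin_subset[OF R] by (force simp: topspace_prod_topology)
  moreover have "closedin (prod_topology X X) (R \<inter> (C \<times> topspace X))"
    using R C by (simp add: closedin_Int closedin_prod_Times_iff)
  moreover have "closed_map (prod_topology X X) X snd"
    using X by (intro continuous_imp_closed_map continuous_map_snd) (simp_all add: compact_space_prod_topology)
  ultimately show ?thesis
    unfolding closed_map_def by simp
qed

lemma closedin_sim_rel:
  assumes continuous: "upper_continuous_metric T \<gamma>"
  shows "closedin (prod_topology T T) {(x, y) \<in> topspace T \<times> topspace T. sim_rel \<gamma> x y}"
proof -
  let ?L = "{(x, y) \<in> topspace T \<times> topspace T. \<gamma> x y \<le> 0}"
  have L: "closedin (prod_topology T T) ?L"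
    using continuous upper_continuous_metric_iff_closedin by blast
  have "continuous_map (prod_topology T T) (prod_topology T T) (\<lambda>z. (snd z, fst z))"
    by (intro continuous_map_pairedI continuous_map_snd continuous_map_fst)
  then have "closedin (prod_topology T T) {z \<in> topspace (prod_topology T T). (snd z, fst z) \<in> ?L}"
    using L by (rule closedin_continuous_map_preimage)
  moreover have "{(x, y) \<in> topspace T \<times> topspace T. sim_rel \<gamma> x y}
      = ?L \<inter> {z \<in> topspace (prod_topology T T). (snd z, fst z) \<in> ?L}"
    unfolding sim_rel_def by auto
  ultimately show ?thesis
    using L by auto
qed

context
  fixes T :: "'a topology" and \<gamma> :: "'a \<Rightarrow> 'a \<Rightarrow> ennreal"
  assumes metric: "is_metric (topspace T) \<gamma>"
    and continuous: "upper_continuous_metric T \<gamma>"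
    and compact: "compact_space T" and Hausdorff: "Hausdorff_space T"
begin

abbreviation (local) "p \<equiv> proj_class T \<gamma>"
abbreviation (local) "Q \<equiv> quotient_topology T p"

text \<open>The preimage of p`C is the \<open>\<sim>\<^sub>\<gamma>\<close>-saturation of C, closed as the image of a closed relation.\<close>

lemma closed_map_proj_class: "closed_map T Q p"
  unfolding closed_map_def
proof (intro allI impI)
  fix C assume C: "closedin T C"
  let ?R = "{(x, y) \<in> topspace T \<times> topspace T. sim_rel \<gamma> x y}"
  have sub: "C \<subseteq> topspace T"
    using closedin_subset[OF C] .
  have "{x \<in> topspace T. p x \<in> p ` C} = ?R `` C"
  proof (intro set_eqI iffI)
    fix x assume "x \<in> {x \<in> topspace T. p x \<in> p ` C}"
    then obtain c where "c \<in> C" "x \<in> topspace T" "p c = p x"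
      by auto
    then show "x \<in> ?R `` C"
      using sub proj_class_eq_iff[OF metric, of c x] by auto
  next
    fix x assume "x \<in> ?R `` C"
    then obtain c where "c \<in> C" "x \<in> topspace T" "sim_rel \<gamma> c x"
      by auto
    then show "x \<in> {x \<in> topspace T. p x \<in> p ` C}"
      using sub proj_class_eq_iff[OF metric, of c x]
      by (metis (mono_tags, lifting) image_eqI mem_Collect_eq subsetD)
  qed
  then have "closedin T {x \<in> topspace T. p x \<in> p ` C}"
    using closedin_Image_closed_relation[OF compact Hausdorff closedin_sim_rel[OF continuous] C]
    by simp
  moreover have "p ` C \<subseteq> p ` topspace T"
    using sub by auto
  ultimately show "closedin Q (p ` C)"
    by (simp add: closedin_quotient_topology)
qed

lemma Hausdorff_space_quotient: "Hausdorff_space Q"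
  using normal_Hausdorff_space_closed_continuous_map_image[OF
      compact_Hausdorff_or_regular_imp_normal_space[OF compact] Hausdorff
      closed_map_proj_class continuous_map_quotient_topology]
  by (simp add: Hausdorff)

text \<open>Each sublevel set of the quotient metric is the image of a compact sublevel set of \<gamma>.\<close>

lemma upper_continuous_quotient_metric: "upper_continuous_metric Q (quotient_metric \<gamma>)"
  unfolding upper_continuous_metric_iff_closedin
proof
  fix u
  let ?pp = "\<lambda>(x, y). (p x, p y)"
  let ?L = "{(x, y) \<in> topspace T \<times> topspace T. \<gamma> x y \<le> u}"
  have "closed_map (prod_topology T T) (prod_topology Q Q) ?pp"
    by (simp add: continuous_imp_closed_map continuous_map_prod_top continuous_map_quotient_topology
        compact_space_prod_topology compact Hausdorff_space_prod_topology Hausdorff_space_quotient)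
  then have "closedin (prod_topology Q Q) (?pp ` ?L)"
    using continuous upper_continuous_metric_iff_closedin closed_map_def by blast
  moreover have "?pp ` ?L = {(A, B) \<in> topspace Q \<times> topspace Q. quotient_metric \<gamma> A B \<le> u}"
  proof (intro set_eqI iffI)
    fix w assume "w \<in> ?pp ` ?L"
    then show "w \<in> {(A, B) \<in> topspace Q \<times> topspace Q. quotient_metric \<gamma> A B \<le> u}"
      using quotient_metric_proj_class[OF metric] by auto
  next
    fix w assume "w \<in> {(A, B) \<in> topspace Q \<times> topspace Q. quotient_metric \<gamma> A B \<le> u}"
    then obtain x y where "x \<in> topspace T" "y \<in> topspace T" "w = (p x, p y)" "\<gamma> x y \<le> u"
      using quotient_metric_proj_class[OF metric] by auto
    then show "w \<in> ?pp ` ?L"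
      by (auto intro!: image_eqI[of _ _ "(x, y)"])
  qed
  ultimately show "closedin (prod_topology Q Q)
      {(A, B) \<in> topspace Q \<times> topspace Q. quotient_metric \<gamma> A B \<le> u}"
    by simp
qed

end

section \<open>Quotient objects and continuous submetrics\<close>

lemma kernel_metric_eq [simp]: "kernel_metric (S, e, f) = (\<lambda>x y. e (f x) (f y))"
  by (simp add: kernel_metric_def)

lemma metric_le_refl [simp]: "metric_le T \<gamma> \<gamma>"
  by (simp add: metric_le_def)

lemma metric_le_kernel_metric_p_quot:
  assumes "is_metric (topspace T) \<gamma>"
  shows "metric_le T (kernel_metric (p_quot T \<gamma>)) \<delta> \<longleftrightarrow> metric_le T \<gamma> \<delta>"
    and "metric_le T \<delta> (kernel_metric (p_quot T \<gamma>)) \<longleftrightarrow> metric_le T \<delta> \<gamma>"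
  using kernel_metric_p_quot[OF assms] by (simp_all add: metric_le_def)

lemma kernel_metric_in_Subm:
  assumes "in_Quot T d q"
  shows "in_Subm T d (kernel_metric q)"
proof -
  obtain S e f where q: "q = (S, e, f)"
    by (cases q)
  from assms have S: "metCH_sep S e" and f: "continuous_map T S f"
    and nonexpansive: "\<forall>x\<in>topspace T. \<forall>y\<in>topspace T. e (f x) (f y) \<le> d x y"
    unfolding q in_Quot_def metCH_mor_def by auto
  have "is_metric (topspace T) (\<lambda>x y. e (f x) (f y))"
    using S continuous_map_image_subset_topspace[OF f]
    unfolding metCH_sep_def is_metric_def by (auto simp: image_subset_iff)
  moreover have "upper_continuous_metric T (\<lambda>x y. e (f x) (f y))"
  proof -
    have "continuous_map (prod_topology T T) (prod_topology S S) (\<lambda>(x, y). (f x, f y))"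
      using f by (simp add: continuous_map_prod_top)
    moreover have "continuous_map (prod_topology S S) upper_topology (\<lambda>(x, y). e x y)"
      using S by (simp add: metCH_sep_def upper_continuous_metric_def)
    ultimately have "continuous_map (prod_topology T T) upper_topology
        ((\<lambda>(x, y). e x y) \<circ> (\<lambda>(x, y). (f x, f y)))"
      by (rule continuous_map_compose)
    then show ?thesis
      unfolding upper_continuous_metric_def by (simp add: comp_def case_prod_unfold)
  qed
  ultimately show ?thesis
    unfolding q in_Subm_def using nonexpansive by simp
qed

lemma p_quot_in_Quot:
  assumes X: "metCH_sep T d" and \<gamma>: "in_Subm T d \<gamma>"
  shows "in_Quot T d (p_quot T \<gamma>)"
proof -
  from \<gamma> have metric: "is_metric (topspace T) \<gamma>" and continuous: "upper_continuous_metric T \<gamma>"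
    and below: "\<forall>x\<in>topspace T. \<forall>y\<in>topspace T. \<gamma> x y \<le> d x y"
    unfolding in_Subm_def by auto
  from X have compact: "compact_space T" and Hausdorff: "Hausdorff_space T"
    unfolding metCH_sep_def by auto
  let ?p = "proj_class T \<gamma>"
  have "metCH_sep (quotient_topology T ?p) (quotient_metric \<gamma>)"
    unfolding metCH_sep_def topspace_quotient_topology
    by (intro conjI compact_space_quotient_topology Hausdorff_space_quotient is_metric_quotient_metric
        separated_quotient_metric upper_continuous_quotient_metric metric continuous compact Hausdorff)
  moreover have "\<forall>x\<in>topspace T. \<forall>y\<in>topspace T. quotient_metric \<gamma> (?p x) (?p y) \<le> d x y"
    using below by (auto simp: quotient_metric_proj_class[OF metric])
  ultimately show ?thesis
    unfolding in_Quot_def p_quot_eq metCH_mor_def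
    using X continuous_map_quotient_topology by simp
qed

lemma kernel_metric_le_if_quot_le:
  assumes q: "in_Quot T d q" and le: "quot_le T q r"
  shows "metric_le T (kernel_metric r) (kernel_metric q)"
proof -
  obtain S e f where q_eq: "q = (S, e, f)"
    by (cases q)
  obtain S' e' g where r_eq: "r = (S', e', g)"
    by (cases r)
  from q have f: "f ` topspace T = topspace S"
    unfolding q_eq in_Quot_def by simp
  from le obtain h where h: "metCH_mor S e S' e' h" and hf: "\<forall>x\<in>topspace T. h (f x) = g x"
    unfolding q_eq r_eq quot_le_def by auto
  show ?thesis
    unfolding metric_le_def q_eq r_eq kernel_metric_eq
  proof (intro ballI)
    fix x y assume xy: "x \<in> topspace T" "y \<in> topspace T"
    then have "e' (h (f x)) (h (f y)) \<le> e (f x) (f y)"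
      using h f unfolding metCH_mor_def by auto
    with xy hf show "e' (g x) (g y) \<le> e (f x) (f y)"
      by simp
  qed
qed

text \<open>Since the codomain of g is separated, \<open>\<kappa>\<^sub>g \<le> \<kappa>\<^sub>f\<close> makes g constant on the fibres of f.\<close>

lemma quot_le_if_kernel_metric_le:
  assumes compact: "compact_space T"
    and q: "in_Quot T d q" and r: "in_Quot T d r"
    and le: "metric_le T (kernel_metric r) (kernel_metric q)"
  shows "quot_le T q r"
proof -
  obtain S e f where q_eq: "q = (S, e, f)"
    by (cases q)
  obtain S' e' g where r_eq: "r = (S', e', g)"
    by (cases r)
  from q have S: "metCH_sep S e" and f: "continuous_map T S f" and f_onto: "f ` topspace T = topspace S"
    unfolding q_eq in_Quot_def metCH_mor_def by auto
  from r have S': "metCH_sep S' e'" and g: "continuous_map T S' g" and g_onto: "g ` topspace T = topspace S'"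
    unfolding r_eq in_Quot_def metCH_mor_def by auto
  have le': "e' (g x) (g y) \<le> e (f x) (f y)" if "x \<in> topspace T" "y \<in> topspace T" for x y
    using le that unfolding metric_le_def q_eq r_eq by simp
  have fibres: "g x = g y" if xy: "x \<in> topspace T" "y \<in> topspace T" "f x = f y" for x y
  proof -
    have "e (f x) (f y) = 0" "e (f y) (f x) = 0"
      using S xy f_onto unfolding metCH_sep_def is_metric_def by auto
    then have "e' (g x) (g y) = 0" "e' (g y) (g x) = 0"
      using le' xy by (metis le_zero_eq)+
    moreover have "g x \<in> topspace S'" "g y \<in> topspace S'"
      using g_onto xy by auto
    ultimately show ?thesis
      using S' unfolding metCH_sep_def separated_metric_def by blast
  qed
  have "quotient_map T S f"
    using S by (intro continuous_imp_quotient_map f compact f_onto) (simp add: metCH_sep_def)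
  then obtain h where h: "continuous_map S S' h" and hf: "\<And>x. x \<in> topspace T \<Longrightarrow> h (f x) = g x"
    using quotient_map_lift_exists g fibres by metis
  have "metCH_mor S e S' e' h"
    unfolding metCH_mor_def
  proof (intro conjI ballI S S' h)
    fix s t assume "s \<in> topspace S" "t \<in> topspace S"
    then obtain x y where "x \<in> topspace T" "y \<in> topspace T" "s = f x" "t = f y"
      using f_onto by (metis imageE)
    then show "e' (h s) (h t) \<le> e s t"
      using hf le' by simp
  qed
  then show ?thesis
    unfolding q_eq r_eq quot_le_def using hf by auto
qed

lemma quot_le_iff_kernel_metric_le:
  assumes "compact_space T" "in_Quot T d q" "in_Quot T d r"
  shows "quot_le T q r \<longleftrightarrow> metric_le T (kernel_metric r) (kernel_metric q)"
  using assms kernel_metric_le_if_quot_le quot_le_if_kernel_metric_le by blast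

theorem theorem3p8:
  fixes T :: "'a topology" and d :: "'a \<Rightarrow> 'a \<Rightarrow> ennreal"
  assumes X: "metCH_sep T d"
  shows
    \<comment> \<open>the two assignments are well defined\<close>
    "(\<forall>q :: 'b topology \<times> ('b \<Rightarrow> 'b \<Rightarrow> ennreal) \<times> ('a \<Rightarrow> 'b).
        in_Quot T d q \<longrightarrow> in_Subm T d (kernel_metric q))
   \<and> (\<forall>\<gamma>. in_Subm T d \<gamma> \<longrightarrow> in_Quot T d (p_quot T \<gamma>))
    \<comment> \<open>both are order-reversing\<close>
   \<and> (\<forall>(q :: 'b topology \<times> ('b \<Rightarrow> 'b \<Rightarrow> ennreal) \<times> ('a \<Rightarrow> 'b))
        (r :: 'c topology \<times> ('c \<Rightarrow> 'c \<Rightarrow> ennreal) \<times> ('a \<Rightarrow> 'c)).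
        in_Quot T d q \<longrightarrow> in_Quot T d r \<longrightarrow> quot_le T q r \<longrightarrow>
        metric_le T (kernel_metric r) (kernel_metric q))
   \<and> (\<forall>\<gamma> \<delta>. in_Subm T d \<gamma> \<longrightarrow> in_Subm T d \<delta> \<longrightarrow> metric_le T \<gamma> \<delta> \<longrightarrow>
        quot_le T (p_quot T \<delta>) (p_quot T \<gamma>))
    \<comment> \<open>the Galois-type correspondence\<close>
   \<and> (\<forall>(q :: 'b topology \<times> ('b \<Rightarrow> 'b \<Rightarrow> ennreal) \<times> ('a \<Rightarrow> 'b)) \<gamma>.
        in_Quot T d q \<longrightarrow> in_Subm T d \<gamma> \<longrightarrow>
        (metric_le T (kernel_metric q) \<gamma> \<longleftrightarrow> quot_le T (p_quot T \<gamma>) q))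
    \<comment> \<open>kappa of p_gamma is gamma\<close>
   \<and> (\<forall>\<gamma>. in_Subm T d \<gamma> \<longrightarrow>
        (\<forall>x\<in>topspace T. \<forall>y\<in>topspace T. kernel_metric (p_quot T \<gamma>) x y = \<gamma> x y))
    \<comment> \<open>p of kappa_f is isomorphic to f\<close>
   \<and> (\<forall>q :: 'b topology \<times> ('b \<Rightarrow> 'b \<Rightarrow> ennreal) \<times> ('a \<Rightarrow> 'b).
        in_Quot T d q \<longrightarrow>
        quot_le T (p_quot T (kernel_metric q)) q \<and> quot_le T q (p_quot T (kernel_metric q)))
    \<comment> \<open>consequently: dual isomorphism of the quotient-object poset with Subm(X)\<close>
   \<and> (\<forall>(q :: 'b topology \<times> ('b \<Rightarrow> 'b \<Rightarrow> ennreal) \<times> ('a \<Rightarrow> 'b))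
        (r :: 'c topology \<times> ('c \<Rightarrow> 'c \<Rightarrow> ennreal) \<times> ('a \<Rightarrow> 'c)).
        in_Quot T d q \<longrightarrow> in_Quot T d r \<longrightarrow>
        (quot_le T q r \<longleftrightarrow> metric_le T (kernel_metric r) (kernel_metric q)))"
proof (intro conjI allI impI ballI)
  have compact: "compact_space T"
    using X by (simp add: metCH_sep_def)
  have Subm_is_metric: "is_metric (topspace T) \<gamma>" if "in_Subm T d \<gamma>" for \<gamma>
    using that by (simp add: in_Subm_def)
  note quot_le_iff = quot_le_iff_kernel_metric_le[OF compact, where d = d]
  note p_quot_Quot = p_quot_in_Quot[OF X]
  note correspondence_simps = quot_le_iff p_quot_Quot kernel_metric_in_Subm Subm_is_metric
    metric_le_kernel_metric_p_quot
  show "in_Subm T d (kernel_metric q)" if "in_Quot T d q" for q :: "'b topology \<times> _"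
    using that by (rule kernel_metric_in_Subm)
  show "in_Quot T d (p_quot T \<gamma>)" if "in_Subm T d \<gamma>" for \<gamma>
    using that by (rule p_quot_Quot)
  show "metric_le T (kernel_metric r) (kernel_metric q)"
    if "in_Quot T d q" "in_Quot T d r" "quot_le T q r"
    for q :: "'b topology \<times> _" and r :: "'c topology \<times> _"
    using that(1,3) by (rule kernel_metric_le_if_quot_le)
  show "quot_le T (p_quot T \<delta>) (p_quot T \<gamma>)"
    if "in_Subm T d \<gamma>" "in_Subm T d \<delta>" "metric_le T \<gamma> \<delta>" for \<gamma> \<delta>
    using that by (simp add: correspondence_simps)
  show "metric_le T (kernel_metric q) \<gamma> \<longleftrightarrow> quot_le T (p_quot T \<gamma>) q"
    if "in_Quot T d q" "in_Subm T d \<gamma>" for q :: "'b topology \<times> _" and \<gamma>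
    using that by (simp add: correspondence_simps)
  show "kernel_metric (p_quot T \<gamma>) x y = \<gamma> x y"
    if "in_Subm T d \<gamma>" "x \<in> topspace T" "y \<in> topspace T" for \<gamma> x y
    using that by (simp add: kernel_metric_p_quot Subm_is_metric)
  show "quot_le T (p_quot T (kernel_metric q)) q" and "quot_le T q (p_quot T (kernel_metric q))"
    if "in_Quot T d q" for q :: "'b topology \<times> _"
    using that by (simp_all add: correspondence_simps)
  show "quot_le T q r \<longleftrightarrow> metric_le T (kernel_metric r) (kernel_metric q)"
    if "in_Quot T d q" "in_Quot T d r" for q :: "'b topology \<times> _" and r :: "'c topology \<times> _"
    using that by (rule quot_le_iff)
qed

end
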